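(* For any finite simple graph $G$, $$|\operatorname{nucleus}(G)|+|\operatorname{diadem}(G)|\le 2\alpha(G)\le |\operatorname{core}(G)|+|\operatorname{corona}(G)|.$$
   Context: For $X\subseteq V(G)$, $N(X)$ is the set of vertices adjacent to some vertex of $X$, and $d(X)=|X|-|N(X)|$. An independent set $S$ is critical if $d(S)=\max\{d(X):X\subseteq V(G)\}$; the empty set may be critical. A maximum critical independent set is a critical independent set of maximum cardinality. $\operatorname{nucleus}(G)$ and $\operatorname{diadem}(G)$ are, respectively, the intersection and the union of all maximum critical independent sets. $\alpha(G)$ is the independence number. $\operatorname{core}(G)$ and $\operatorname{corona}(G)$ are, respectively, the intersection and the union of all maximum independent sets of $G$. *)

theory Defs
  imports Main
begin

definition simple_graph :: "'a set \<Rightarrow> ('a \<Rightarrow> 'a \<Rightarrow> bool) \<Rightarrow> bool" where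
  "simple_graph V E \<longleftrightarrow> finite V \<and> (\<forall>u v. E u v \<longrightarrow> u \<in> V \<and> v \<in> V)
     \<and> (\<forall>u v. E u v \<longrightarrow> E v u) \<and> (\<forall>v. \<not> E v v)"

definition nbhd :: "'a set \<Rightarrow> ('a \<Rightarrow> 'a \<Rightarrow> bool) \<Rightarrow> 'a set \<Rightarrow> 'a set" where
  "nbhd V E X = {v \<in> V. \<exists>x\<in>X. E x v}"

definition dval :: "'a set \<Rightarrow> ('a \<Rightarrow> 'a \<Rightarrow> bool) \<Rightarrow> 'a set \<Rightarrow> int" where
  "dval V E X = int (card X) - int (card (nbhd V E X))"

definition indep :: "'a set \<Rightarrow> ('a \<Rightarrow> 'a \<Rightarrow> bool) \<Rightarrow> 'a set \<Rightarrow> bool" where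
  "indep V E S \<longleftrightarrow> S \<subseteq> V \<and> (\<forall>x\<in>S. \<forall>y\<in>S. \<not> E x y)"

definition max_d :: "'a set \<Rightarrow> ('a \<Rightarrow> 'a \<Rightarrow> bool) \<Rightarrow> int" where
  "max_d V E = Max (dval V E ` Pow V)"

definition critical_indep :: "'a set \<Rightarrow> ('a \<Rightarrow> 'a \<Rightarrow> bool) \<Rightarrow> 'a set \<Rightarrow> bool" where
  "critical_indep V E S \<longleftrightarrow> indep V E S \<and> dval V E S = max_d V E"

definition max_critical_indep :: "'a set \<Rightarrow> ('a \<Rightarrow> 'a \<Rightarrow> bool) \<Rightarrow> 'a set \<Rightarrow> bool" where
  "max_critical_indep V E S \<longleftrightarrow> critical_indep V E S
     \<and> (\<forall>T. critical_indep V E T \<longrightarrow> card T \<le> card S)"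

definition nucleus :: "'a set \<Rightarrow> ('a \<Rightarrow> 'a \<Rightarrow> bool) \<Rightarrow> 'a set" where
  "nucleus V E = \<Inter> {S. max_critical_indep V E S}"

definition diadem :: "'a set \<Rightarrow> ('a \<Rightarrow> 'a \<Rightarrow> bool) \<Rightarrow> 'a set" where
  "diadem V E = \<Union> {S. max_critical_indep V E S}"

definition alpha :: "'a set \<Rightarrow> ('a \<Rightarrow> 'a \<Rightarrow> bool) \<Rightarrow> nat" where
  "alpha V E = Max (card ` {S. indep V E S})"

definition max_indep :: "'a set \<Rightarrow> ('a \<Rightarrow> 'a \<Rightarrow> bool) \<Rightarrow> 'a set \<Rightarrow> bool" where
  "max_indep V E S \<longleftrightarrow> indep V E S \<and> card S = alpha V E"

definition core :: "'a set \<Rightarrow> ('a \<Rightarrow> 'a \<Rightarrow> bool) \<Rightarrow> 'a set" where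
  "core V E = \<Inter> {S. max_indep V E S}"

definition corona :: "'a set \<Rightarrow> ('a \<Rightarrow> 'a \<Rightarrow> bool) \<Rightarrow> 'a set" where
  "corona V E = \<Union> {S. max_indep V E S}"

end

theory Submission
  imports Defs
begin

text \<open>
Upper bound: fix a maximum critical independent set S. Every vertex of diadem - S
has a neighbour in S, for otherwise it could be added to S keeping d maximal. Since d is
supermodular, a critical set S satisfies Hall's condition into N(S), so diadem - S has at
least as many neighbours in S, and these avoid the nucleus. Hence
|diadem| - |S| \<le> |S| - |nucleus|, and |S| \<le> \<alpha>.

Lower bound: if S is a maximum independent set and the sets of a family all contain I and
are contained in U, then (S \<inter> U) \<union> (I - S) is independent, which yields
|I| + |U| \<le> |I \<inter> S| + |U \<union> S|; induction over the family of all maximum independent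
sets gives 2\<alpha> \<le> |core| + |corona|.
\<close>

lemma simple_graph_finite: "simple_graph V E \<Longrightarrow> finite V"
  by (simp add: simple_graph_def)

lemma simple_graph_edge_in: "simple_graph V E \<Longrightarrow> E u v \<Longrightarrow> u \<in> V \<and> v \<in> V"
  by (simp add: simple_graph_def)

lemma simple_graph_sym: "simple_graph V E \<Longrightarrow> E u v \<Longrightarrow> E v u"
  by (simp add: simple_graph_def)

lemma nbhd_subset: "nbhd V E X \<subseteq> V"
  by (auto simp: nbhd_def)

lemma finite_nbhd: "simple_graph V E \<Longrightarrow> finite (nbhd V E X)"
  using simple_graph_finite nbhd_subset finite_subset by metis

lemma finite_indep_sets: "simple_graph V E \<Longrightarrow> finite {S. indep V E S}"
  by (rule finite_subset[of _ "Pow V"]) (auto simp: indep_def simple_graph_finite)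

lemma indep_finite: "simple_graph V E \<Longrightarrow> indep V E S \<Longrightarrow> finite S"
  by (meson finite_subset indep_def simple_graph_finite)

lemma card_indep_le_alpha:
  assumes "simple_graph V E" "indep V E S"
  shows "card S \<le> alpha V E"
  unfolding alpha_def using assms finite_indep_sets[OF assms(1)] by (auto intro: Max_ge)

lemma indep_Un:
  assumes G: "simple_graph V E" and "indep V E S" "indep V E T"
    and no_edge: "\<And>s t. s \<in> S \<Longrightarrow> t \<in> T \<Longrightarrow> \<not> E s t"
  shows "indep V E (S \<union> T)"
  using assms simple_graph_sym[OF G] unfolding indep_def by blast

lemma dval_le_max_d:
  assumes "simple_graph V E" "X \<subseteq> V"
  shows "dval V E X \<le> max_d V E"
  unfolding max_d_def using assms simple_graph_finite[OF assms(1)] by (simp add: Max_ge)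

lemma max_d_attained:
  assumes "simple_graph V E"
  obtains X where "X \<subseteq> V" "dval V E X = max_d V E"
proof -
  have "max_d V E \<in> dval V E ` Pow V"
    unfolding max_d_def using simple_graph_finite[OF assms] by (intro Max_in) auto
  thus ?thesis using that by auto
qed

lemma dval_supermodular:
  assumes G: "simple_graph V E" and "A \<subseteq> V" "B \<subseteq> V"
  shows "dval V E A + dval V E B \<le> dval V E (A \<union> B) + dval V E (A \<inter> B)"
proof -
  have fin: "finite A" "finite B"
    using assms simple_graph_finite finite_subset by metis+
  have Un: "nbhd V E (A \<union> B) = nbhd V E A \<union> nbhd V E B"
    by (auto simp: nbhd_def)
  have "nbhd V E (A \<inter> B) \<subseteq> nbhd V E A \<inter> nbhd V E B"
    by (auto simp: nbhd_def)
  hence "card (nbhd V E (A \<inter> B)) \<le> card (nbhd V E A \<inter> nbhd V E B)"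
    using finite_nbhd[OF G] by (simp add: card_mono)
  moreover have "card (A \<union> B) + card (A \<inter> B) = card A + card B"
    using card_Un_Int fin by metis
  moreover have "card (nbhd V E A \<union> nbhd V E B) + card (nbhd V E A \<inter> nbhd V E B)
      = card (nbhd V E A) + card (nbhd V E B)"
    using card_Un_Int finite_nbhd[OF G] by metis
  ultimately show ?thesis unfolding dval_def Un by linarith
qed

lemma dval_Un_eq_max_d:
  assumes G: "simple_graph V E" and "A \<subseteq> V" "B \<subseteq> V"
    and "dval V E A = max_d V E" "dval V E B = max_d V E"
  shows "dval V E (A \<union> B) = max_d V E"
  using dval_supermodular[OF assms(1-3)] dval_le_max_d[OF G, of "A \<union> B"]
    dval_le_max_d[OF G, of "A \<inter> B"] assms by force

text \<open>Removing N(X) from X deletes the vertices of X \<inter> N(X) and at least as many neighbours.\<close>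
lemma dval_Diff_nbhd_ge:
  assumes G: "simple_graph V E" and X: "X \<subseteq> V"
  shows "dval V E X \<le> dval V E (X - nbhd V E X)"
proof -
  let ?N = "nbhd V E X"
  have fX: "finite X" using X simple_graph_finite[OF G] finite_subset by auto
  have "nbhd V E (X - ?N) \<subseteq> ?N - X"
    unfolding nbhd_def using simple_graph_sym[OF G] simple_graph_edge_in[OF G] by blast
  hence "card (nbhd V E (X - ?N)) \<le> card (?N - X)"
    using finite_nbhd[OF G] by (simp add: card_mono)
  moreover have "card ?N = card (?N \<inter> X) + card (?N - X)"
    using card_Int_Diff finite_nbhd[OF G] by blast
  moreover have "card (X - ?N) = card X - card (X \<inter> ?N)"
    using fX by (simp add: card_Diff_subset_Int)
  moreover have "card (X \<inter> ?N) \<le> card X"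
    using fX by (simp add: card_mono)
  ultimately show ?thesis unfolding dval_def by (simp add: Int_commute)
qed

lemma indep_Diff_nbhd:
  assumes "simple_graph V E" "X \<subseteq> V"
  shows "indep V E (X - nbhd V E X)"
  unfolding indep_def nbhd_def using assms simple_graph_edge_in[OF assms(1)] by blast

lemma critical_indep_Diff_nbhd:
  assumes G: "simple_graph V E" and "X \<subseteq> V" "dval V E X = max_d V E"
  shows "critical_indep V E (X - nbhd V E X)"
proof -
  have "dval V E X \<le> dval V E (X - nbhd V E X)"
    using dval_Diff_nbhd_ge[OF G] assms(2) .
  moreover have "dval V E (X - nbhd V E X) \<le> max_d V E"
    using dval_le_max_d[OF G] assms(2) by blast
  ultimately show ?thesis
    using assms(3) indep_Diff_nbhd[OF G assms(2)] unfolding critical_indep_def by simp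
qed

lemma max_critical_indep_exists:
  assumes G: "simple_graph V E"
  obtains S where "max_critical_indep V E S"
proof -
  let ?C = "{S. critical_indep V E S}"
  have fin: "finite ?C"
    by (rule finite_subset[OF _ finite_indep_sets[OF G]]) (auto simp: critical_indep_def)
  obtain X where "X \<subseteq> V" "dval V E X = max_d V E"
    using max_d_attained[OF G] .
  hence "?C \<noteq> {}" using critical_indep_Diff_nbhd[OF G] by blast
  hence "Max (card ` ?C) \<in> card ` ?C" using fin by (intro Max_in) auto
  then obtain S where "S \<in> ?C" "card S = Max (card ` ?C)" by auto
  hence "max_critical_indep V E S"
    unfolding max_critical_indep_def using fin by (auto intro: Max_ge)
  thus ?thesis using that by blast
qed

text \<open>
S \<union> S' is critical, hence so is Y = (S \<union> S') - N(S \<union> S'); a vertex of S' without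
neighbour in S lies in Y, and S \<union> Y is a larger critical independent set.
\<close>
lemma diadem_Diff_subset_nbhd:
  assumes G: "simple_graph V E" and S: "max_critical_indep V E S"
  shows "diadem V E - S \<subseteq> nbhd V E S"
proof
  fix v assume "v \<in> diadem V E - S"
  then obtain S' where S': "max_critical_indep V E S'" and v: "v \<in> S'" "v \<notin> S"
    unfolding diadem_def by auto
  have SV: "S \<subseteq> V" "S' \<subseteq> V" and indS: "indep V E S" "indep V E S'"
    and dS: "dval V E S = max_d V E" "dval V E S' = max_d V E"
    using S S' unfolding max_critical_indep_def critical_indep_def indep_def by auto
  let ?X = "S \<union> S'"
  let ?Y = "?X - nbhd V E ?X"
  have XV: "?X \<subseteq> V" using SV by blast
  have Y: "critical_indep V E ?Y"
    using critical_indep_Diff_nbhd[OF G XV] dval_Un_eq_max_d[OF G SV dS] by blast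
  have no_edge: "\<not> E x y" if "x \<in> ?X" "y \<in> ?Y" for x y
    using that simple_graph_edge_in[OF G] unfolding nbhd_def by blast
  have indU: "indep V E (S \<union> ?Y)"
    using indep_Un[OF G indS(1)] Y no_edge unfolding critical_indep_def by blast
  have "dval V E (S \<union> ?Y) = max_d V E"
    using dval_Un_eq_max_d[OF G SV(1), of ?Y] XV dS Y unfolding critical_indep_def by blast
  hence "card (S \<union> ?Y) \<le> card S"
    using S indU unfolding max_critical_indep_def critical_indep_def by blast
  moreover have "finite (S \<union> ?Y)" using indep_finite[OF G indU] .
  ultimately have "S \<union> ?Y \<subseteq> S"
    by (metis card_seteq sup_ge1)
  hence "v \<notin> ?Y" using v by blast
  thus "v \<in> nbhd V E S"
    using v indS(2) unfolding nbhd_def indep_def by blast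
qed

text \<open>Critical sets satisfy Hall's condition into their neighbourhoods: compare with S - N(A).\<close>
lemma critical_Hall_condition:
  assumes G: "simple_graph V E" and SV: "S \<subseteq> V" and dS: "dval V E S = max_d V E"
    and A: "A \<subseteq> nbhd V E S"
  shows "card A \<le> card (S \<inter> nbhd V E A)"
proof -
  let ?S' = "S - nbhd V E A"
  have fS: "finite S" using SV simple_graph_finite[OF G] finite_subset by auto
  have fA: "finite A" using A finite_nbhd[OF G] finite_subset by auto
  have N: "nbhd V E ?S' \<subseteq> nbhd V E S - A"
    unfolding nbhd_def using simple_graph_sym[OF G] simple_graph_edge_in[OF G] by blast
  have "card (nbhd V E ?S') \<le> card (nbhd V E S) - card A"
    using card_mono[OF _ N] finite_nbhd[OF G] card_Diff_subset[OF fA A] by auto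
  moreover have "card A \<le> card (nbhd V E S)"
    using card_mono[OF finite_nbhd[OF G] A] .
  moreover have "card ?S' = card S - card (S \<inter> nbhd V E A)"
    using fS by (simp add: card_Diff_subset_Int)
  moreover have "card (S \<inter> nbhd V E A) \<le> card S"
    using fS by (simp add: card_mono)
  moreover have "dval V E ?S' \<le> max_d V E"
    using dval_le_max_d[OF G] SV by blast
  ultimately show ?thesis using dS unfolding dval_def by linarith
qed

lemma card_nucleus_add_diadem_le:
  assumes G: "simple_graph V E" and S: "max_critical_indep V E S"
  shows "card (nucleus V E) + card (diadem V E) \<le> 2 * card S"
proof -
  let ?A = "diadem V E - S"
  have SV: "S \<subseteq> V" and dS: "dval V E S = max_d V E"
    using S unfolding max_critical_indep_def critical_indep_def indep_def by auto
  have fS: "finite S" using SV simple_graph_finite[OF G] finite_subset by auto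
  have nucleus_S: "nucleus V E \<subseteq> S" and S_diadem: "S \<subseteq> diadem V E"
    unfolding nucleus_def diadem_def using S by auto
  have "S \<inter> nbhd V E ?A \<subseteq> S - nucleus V E"
  proof
    fix s assume s: "s \<in> S \<inter> nbhd V E ?A"
    then obtain a S' where "E a s" "a \<in> S'" "max_critical_indep V E S'"
      unfolding nbhd_def diadem_def by auto
    hence "s \<notin> S'"
      unfolding max_critical_indep_def critical_indep_def indep_def by auto
    thus "s \<in> S - nucleus V E"
      using s \<open>max_critical_indep V E S'\<close> unfolding nucleus_def by auto
  qed
  hence "card (S \<inter> nbhd V E ?A) \<le> card S - card (nucleus V E)"
    using fS nucleus_S by (metis card_Diff_subset card_mono finite_Diff finite_subset)
  moreover have "card ?A \<le> card (S \<inter> nbhd V E ?A)"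
    using critical_Hall_condition[OF G SV dS diadem_Diff_subset_nbhd[OF G S]] .
  moreover have "card (diadem V E) = card ?A + card S"
  proof -
    have "finite (diadem V E)"
      using diadem_Diff_subset_nbhd[OF G S] finite_nbhd[OF G] fS
      by (metis Diff_partition finite_Un finite_subset S_diadem)
    thus ?thesis using card_Diff_subset[OF fS S_diadem] card_mono[OF _ S_diadem] by simp
  qed
  moreover have "card (nucleus V E) \<le> card S"
    using card_mono[OF fS nucleus_S] .
  ultimately show ?thesis by linarith
qed

lemma max_indep_exists:
  assumes G: "simple_graph V E"
  shows "{S. max_indep V E S} \<noteq> {}"
proof -
  have "indep V E {}" by (simp add: indep_def)
  hence "alpha V E \<in> card ` {S. indep V E S}"
    unfolding alpha_def using finite_indep_sets[OF G] by (intro Max_in) auto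
  thus ?thesis unfolding max_indep_def by auto
qed

lemma card_Inter_add_Union_ge:
  assumes G: "simple_graph V E"
    and "finite F" "F \<noteq> {}" "\<And>S. S \<in> F \<Longrightarrow> max_indep V E S"
  shows "2 * alpha V E \<le> card (\<Inter>F) + card (\<Union>F)"
  using assms(2-4)
proof (induction F rule: finite_ne_induct)
  case (singleton S)
  thus ?case unfolding max_indep_def by auto
next
  case (insert S F)
  let ?I = "\<Inter>F" and ?U = "\<Union>F"
  have S: "indep V E S" "card S = alpha V E"
    using insert.prems unfolding max_indep_def by auto
  have F: "\<And>B. B \<in> F \<Longrightarrow> indep V E B"
    using insert.prems unfolding max_indep_def by auto
  obtain B0 where B0: "B0 \<in> F" using insert.hyps by auto
  have fU: "finite ?U"
    using F insert.hyps(1) indep_finite[OF G] by blast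
  have fI: "finite ?I" using B0 F indep_finite[OF G] by (meson Inter_lower finite_subset)
  have fS: "finite S" using indep_finite[OF G S(1)] .
  have "indep V E ((S \<inter> ?U) \<union> (?I - S))"
    using S(1) F B0 unfolding indep_def by blast
  hence "card ((S \<inter> ?U) \<union> (?I - S)) \<le> alpha V E"
    using card_indep_le_alpha[OF G] by blast
  moreover have "card ((S \<inter> ?U) \<union> (?I - S)) = card (S \<inter> ?U) + card (?I - S)"
    by (rule card_Un_disjoint) (use fS fI in auto)
  moreover have "card (?U \<union> S) + card (S \<inter> ?U) = card ?U + card S"
    using card_Un_Int[OF fU fS] by (simp add: Int_commute)
  moreover have "card (?I \<inter> S) + card (?I - S) = card ?I"
    using card_Int_Diff[OF fI] by simp
  ultimately have "card ?I + card ?U \<le> card (?I \<inter> S) + card (?U \<union> S)"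
    using S(2) by linarith
  moreover have "\<Inter>(insert S F) = ?I \<inter> S" "\<Union>(insert S F) = ?U \<union> S" by auto
  moreover have "2 * alpha V E \<le> card ?I + card ?U"
    using insert.IH insert.prems by blast
  ultimately show ?case by simp
qed

theorem corollary4p1:
  fixes V :: "'a set" and E :: "'a \<Rightarrow> 'a \<Rightarrow> bool"
  assumes "simple_graph V E"
  shows "card (nucleus V E) + card (diadem V E) \<le> 2 * alpha V E
       \<and> 2 * alpha V E \<le> card (core V E) + card (corona V E)"
proof
  obtain S where S: "max_critical_indep V E S"
    using max_critical_indep_exists[OF assms] .
  have "card S \<le> alpha V E"
    using S card_indep_le_alpha[OF assms]
    unfolding max_critical_indep_def critical_indep_def by blast
  thus "card (nucleus V E) + card (diadem V E) \<le> 2 * alpha V E"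
    using card_nucleus_add_diadem_le[OF assms S] by linarith
next
  have "finite {S. max_indep V E S}"
    by (rule finite_subset[OF _ finite_indep_sets[OF assms]]) (auto simp: max_indep_def)
  thus "2 * alpha V E \<le> card (core V E) + card (corona V E)"
    using card_Inter_add_Union_ge[OF assms] max_indep_exists[OF assms]
    unfolding core_def corona_def by blast
qed

end
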